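(* Let $\mathcal{D}=(\Omega,\mathcal{B})$ be a supersimple $2$-$(n,4,\lambda)$ design satisfying property $(\triangle)$, such that $(\Omega,\mathcal{C})$ is a regular two-graph where $\mathcal{C}$ is the set of collinear triples. Then for pairwise distinct $x,y,z\in\Omega$, $$[y,z]\cdot[x,y]\cdot[y,z]=\begin{cases}[x,y]&\text{if }x\in\overline{y,z},\\ [x,z]&\text{otherwise.}\end{cases}$$
   Context: A $2$-$(n,4,\lambda)$ design $(\Omega,\mathcal{B})$: $n$ points, a multiset of $4$-subsets (lines), every $2$-subset in exactly $\lambda$ lines; supersimple: distinct lines meet in at most two points. For distinct $a,b$ with lines $\{a,b,a_i,b_i\}$ through them, $[a,b]:=(a,b)\prod_i(a_i,b_i)\in\operatorname{Sym}(\Omega)$. Permutations act on the right, products composed left to right. For distinct $y,z$, $\overline{y,z}$ is the set of points $w$ such that some line contains $y,z,w$. Property $(\triangle)$: if $B_1,B_2\in\mathcal{B}$ with $|B_1\cap B_2|=2$ then $B_1\triangle B_2\in\mathcal{B}$. Regular two-graph: $(\Omega,\mathcal{C})$ is a $2$-$(n,3,\mu)$ design with every $4$-subset containing $0,2$ or $4$ members of $\mathcal{C}$. *)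

theory Defs
  imports Main "HOL-Library.Multiset"
begin

definition design_2 :: "'a set \<Rightarrow> 'a set multiset \<Rightarrow> nat \<Rightarrow> nat \<Rightarrow> nat \<Rightarrow> bool" where
  "design_2 \<Omega> \<B> n k lam \<longleftrightarrow>
     finite \<Omega> \<and> card \<Omega> = n \<and>
     (\<forall>B \<in># \<B>. B \<subseteq> \<Omega> \<and> card B = k) \<and>
     (\<forall>p \<in> \<Omega>. \<forall>q \<in> \<Omega>. p \<noteq> q \<longrightarrow> size (filter_mset (\<lambda>B. {p, q} \<subseteq> B) \<B>) = lam)"

text \<open>Supersimple: distinct lines (distinct members of the multiset, counted with
  multiplicity) meet in at most two points.  For repeated blocks this forbids
  multiplicity > 1.\<close>
definition supersimple :: "'a set multiset \<Rightarrow> bool" where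
  "supersimple \<B> \<longleftrightarrow>
     (\<forall>B \<in># \<B>. count \<B> B \<ge> 2 \<longrightarrow> card B \<le> 2) \<and>
     (\<forall>B1 \<in># \<B>. \<forall>B2 \<in># \<B>. B1 \<noteq> B2 \<longrightarrow> card (B1 \<inter> B2) \<le> 2)"

definition prop_triangle :: "'a set multiset \<Rightarrow> bool" where
  "prop_triangle \<B> \<longleftrightarrow>
     (\<forall>B1 \<in># \<B>. \<forall>B2 \<in># \<B>. card (B1 \<inter> B2) = 2 \<longrightarrow> (B1 - B2) \<union> (B2 - B1) \<in># \<B>)"

definition collinear_triples :: "'a set \<Rightarrow> 'a set multiset \<Rightarrow> 'a set set" where
  "collinear_triples \<Omega> \<B> = {T. T \<subseteq> \<Omega> \<and> card T = 3 \<and> (\<exists>B \<in># \<B>. T \<subseteq> B)}"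

definition regular_two_graph :: "'a set \<Rightarrow> 'a set set \<Rightarrow> bool" where
  "regular_two_graph \<Omega> \<C> \<longleftrightarrow>
     (\<exists>mu. design_2 \<Omega> (mset_set \<C>) (card \<Omega>) 3 mu) \<and> finite \<C> \<and>
     (\<forall>F. F \<subseteq> \<Omega> \<longrightarrow> card F = 4 \<longrightarrow> card {T \<in> \<C>. T \<subseteq> F} \<in> {0, 2, 4})"

definition line_through :: "'a set multiset \<Rightarrow> 'a \<Rightarrow> 'a \<Rightarrow> 'a set" where
  "line_through \<B> y z = {w. \<exists>B \<in># \<B>. {y, z, w} \<subseteq> B}"

text \<open>The involution [a,b] = (a,b) * prod_i (a_i,b_i), where the lines through a,b are
  {a,b,a_i,b_i}.  In a supersimple design these transpositions are disjoint, so the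
  product is the map swapping a and b, and swapping the two remaining points of each
  line through a and b, fixing all other points.\<close>
definition brk :: "'a set multiset \<Rightarrow> 'a \<Rightarrow> 'a \<Rightarrow> 'a \<Rightarrow> 'a" where
  "brk \<B> a b x =
     (if x = a then b
      else if x = b then a
      else if (\<exists>B \<in># \<B>. {a, b, x} \<subseteq> B)
        then (THE y. y \<notin> {a, b, x} \<and> (\<exists>B \<in># \<B>. {a, b, x, y} \<subseteq> B))
      else x)"

end

theory Submission
  imports Defs
begin

text \<open>Every involution \<open>[a,b]\<close> is an automorphism of the design. For a line through \<open>a\<close>
  but not \<open>b\<close> this follows from \<open>(\<triangle>)\<close>, applied to the lines joining \<open>a, b\<close> with the points of
  the line that are collinear with them; the regular two-graph enters through the fact that
  any four points carry an even number of collinear triples, which forces the number of such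
  points to be odd. Lines avoiding \<open>a\<close> and \<open>b\<close> are reduced to this case by one more application
  of \<open>(\<triangle>)\<close>. Since \<open>[c,d]\<close> is defined from the lines through \<open>c, d\<close>, conjugating by an
  automorphism \<open>g\<close> gives \<open>[g c, g d]\<close>, so the left-hand side equals \<open>[x[y,z], z]\<close>. If \<open>x\<close> is not
  on a line through \<open>y, z\<close> then \<open>[y,z]\<close> fixes \<open>x\<close>; otherwise \<open>{y, z, x, x[y,z]}\<close> is a line, and
  \<open>[a,b] = [c,d]\<close> for every line \<open>{a, b, c, d}\<close>.\<close>

lemma even_count_four_parity:
  assumes "distinct [p, q, r, s]" and "card {x \<in> {p, q, r, s}. P x} \<in> {0, 2, 4}"
  shows "(P p \<longleftrightarrow> P q) \<longleftrightarrow> (P r \<longleftrightarrow> P s)"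
proof -
  have split: "{x \<in> {p, q, r, s}. P x} = (if P p then {p} else {}) \<union> (if P q then {q} else {})
      \<union> (if P r then {r} else {}) \<union> (if P s then {s} else {})"
    by auto
  show ?thesis
    using assms unfolding split by (cases "P p"; cases "P q"; cases "P r"; cases "P s") auto
qed

locale supersimple_triangle_design =
  fixes \<Omega> :: "'a set" and \<B> :: "'a set multiset"
  assumes block_subset: "L \<in># \<B> \<Longrightarrow> L \<subseteq> \<Omega>"
    and block_card: "L \<in># \<B> \<Longrightarrow> card L = 4"
    and supersimple: "supersimple \<B>"
    and triangle: "prop_triangle \<B>"
    and two_graph: "regular_two_graph \<Omega> (collinear_triples \<Omega> \<B>)"
begin

definition collinear :: "'a \<Rightarrow> 'a \<Rightarrow> 'a \<Rightarrow> bool" where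
  "collinear p q r \<longleftrightarrow> (\<exists>L \<in># \<B>. {p, q, r} \<subseteq> L)"

definition is_line :: "'a \<Rightarrow> 'a \<Rightarrow> 'a \<Rightarrow> 'a \<Rightarrow> bool" where
  "is_line p q r s \<longleftrightarrow> distinct [p, q, r, s] \<and> {p, q, r, s} \<in># \<B>"

definition automorphism :: "('a \<Rightarrow> 'a) \<Rightarrow> bool" where
  "automorphism g \<longleftrightarrow> bij g \<and> (\<forall>L. g ` L \<in># \<B> \<longleftrightarrow> L \<in># \<B>)"

abbreviation br :: "'a \<Rightarrow> 'a \<Rightarrow> 'a \<Rightarrow> 'a" where
  "br \<equiv> brk \<B>"

lemma block_finite: "L \<in># \<B> \<Longrightarrow> finite L"
  using block_card by (metis card.infinite zero_neq_numeral)

lemma block_eq_if_three_common: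
  assumes "L1 \<in># \<B>" "L2 \<in># \<B>" "distinct [a, b, c]" "{a, b, c} \<subseteq> L1" "{a, b, c} \<subseteq> L2"
  shows "L1 = L2"
proof (rule ccontr)
  assume "L1 \<noteq> L2"
  with assms(1,2) supersimple have "card (L1 \<inter> L2) \<le> 2"
    unfolding supersimple_def by blast
  moreover have "card {a, b, c} \<le> card (L1 \<inter> L2)"
    using assms by (intro card_mono) (auto intro: block_finite)
  ultimately show False
    using assms(3) by simp
qed

lemma collinear_commute:
  "collinear p q r \<longleftrightarrow> collinear q p r"
  "collinear p q r \<longleftrightarrow> collinear p r q"
  by (auto simp: collinear_def insert_commute)

lemma is_line_commute:
  "is_line p q r s \<longleftrightarrow> is_line q p r s"
  "is_line p q r s \<longleftrightarrow> is_line p r q s"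
  "is_line p q r s \<longleftrightarrow> is_line p q s r"
  by (auto simp: is_line_def insert_commute)

lemma is_line_collinear: "is_line p q r s \<Longrightarrow> {x, y, z} \<subseteq> {p, q, r, s} \<Longrightarrow> collinear x y z"
  unfolding is_line_def collinear_def by blast

lemma is_line_subset: "is_line p q r s \<Longrightarrow> {p, q, r, s} \<subseteq> \<Omega>"
  unfolding is_line_def using block_subset by blast

lemma is_line_unique: "is_line a b c d \<Longrightarrow> is_line a b c e \<Longrightarrow> e = d"
proof -
  assume d: "is_line a b c d" and e: "is_line a b c e"
  have "{a, b, c, d} = {a, b, c, e}"
    using d e by (intro block_eq_if_three_common[of _ _ a b c]) (auto simp: is_line_def)
  with e show ?thesis
    unfolding is_line_def by auto
qed

lemma block_obtain_line:
  assumes "L \<in># \<B>" "x \<in> L"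
  obtains q r s where "L = {x, q, r, s}" "is_line x q r s"
proof -
  have "card (L - {x}) = 3"
    using assms block_card block_finite by simp
  then obtain q r s where "L - {x} = {q, r, s}" "q \<noteq> r" "r \<noteq> s" "q \<noteq> s"
    unfolding card_3_iff by blast
  with assms have "L = {x, q, r, s}" "distinct [x, q, r, s]"
    by auto
  with assms(1) that show thesis
    by (simp add: is_line_def)
qed

lemma block_obtain_line_through:
  assumes "L \<in># \<B>" "x \<in> L" "y \<in> L" "x \<noteq> y"
  obtains r s where "L = {x, y, r, s}" "is_line x y r s"
proof -
  have "card (L - {x, y}) = 2"
    using assms block_card block_finite by (simp add: card_Diff_subset)
  then obtain r s where "L - {x, y} = {r, s}" "r \<noteq> s"
    unfolding card_2_iff by blast
  with assms have "L = {x, y, r, s}" "distinct [x, y, r, s]"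
    by auto
  with assms(1) that show thesis
    by (simp add: is_line_def)
qed

lemma is_line_symdiff:
  assumes "is_line a b c d" "is_line a b e f" "c \<notin> {e, f}" "d \<notin> {e, f}"
  shows "is_line c d e f"
proof -
  let ?L1 = "{a, b, c, d}" and ?L2 = "{a, b, e, f}"
  have "?L1 \<inter> ?L2 = {a, b}" "(?L1 - ?L2) \<union> (?L2 - ?L1) = {c, d, e, f}"
    using assms by (auto simp: is_line_def)
  moreover have "card {a, b} = 2"
    using assms(1) by (simp add: is_line_def)
  ultimately have "{c, d, e, f} \<in># \<B>"
    using assms(1,2) triangle unfolding prop_triangle_def is_line_def by metis
  with assms show ?thesis
    by (auto simp: is_line_def)
qed

lemma brk_left [simp]: "br a b a = b"
  by (simp add: brk_def)

lemma brk_right [simp]: "br a b b = a"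
  by (simp add: brk_def)

lemma brk_commute: "br a b = br b a"
proof
  fix x
  have swap:
    "\<And>B. {a, b, x} \<subseteq> B \<longleftrightarrow> {b, a, x} \<subseteq> B"
    "\<And>B y. {a, b, x, y} \<subseteq> B \<longleftrightarrow> {b, a, x, y} \<subseteq> B"
    "\<And>y. y \<notin> {a, b, x} \<longleftrightarrow> y \<notin> {b, a, x}"
    by auto
  show "br a b x = br b a x"
    unfolding brk_def swap by simp
qed

lemma brk_is_line: "is_line a b c d \<Longrightarrow> br a b c = d"
proof -
  assume line: "is_line a b c d"
  then have block: "{a, b, c, d} \<in># \<B>" and "c \<noteq> a" "c \<noteq> b" "d \<notin> {a, b, c}"
    by (auto simp: is_line_def)
  moreover have "\<exists>B \<in># \<B>. {a, b, c} \<subseteq> B"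
    using block by blast
  ultimately have "br a b c = (THE y. y \<notin> {a, b, c} \<and> (\<exists>B \<in># \<B>. {a, b, c, y} \<subseteq> B))"
    unfolding brk_def by (simp only: if_False if_True)
  also have "\<dots> = d"
  proof (rule the_equality)
    show "d \<notin> {a, b, c} \<and> (\<exists>B \<in># \<B>. {a, b, c, d} \<subseteq> B)"
      using block \<open>d \<notin> {a, b, c}\<close> by blast
  next
    fix y
    assume y: "y \<notin> {a, b, c} \<and> (\<exists>B \<in># \<B>. {a, b, c, y} \<subseteq> B)"
    then obtain B where B: "B \<in># \<B>" "{a, b, c, y} \<subseteq> B"
      by blast
    have "B = {a, b, c, d}"
      using B block line by (intro block_eq_if_three_common[of _ _ a b c]) (auto simp: is_line_def)
    with B y show "y = d"
      by auto
  qed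
  finally show ?thesis .
qed

lemma is_line_brk: "distinct [a, b, c] \<Longrightarrow> collinear a b c \<Longrightarrow> is_line a b c (br a b c)"
proof -
  assume abc: "distinct [a, b, c]" and "collinear a b c"
  then obtain L where L: "L \<in># \<B>" "{a, b, c} \<subseteq> L"
    unfolding collinear_def by blast
  then obtain r s where "L = {a, b, r, s}" "is_line a b r s"
    using abc by (elim block_obtain_line_through[of L a b]) auto
  with L abc have "is_line a b c s \<or> is_line a b c r"
    by (auto simp: is_line_commute)
  then show ?thesis
    using brk_is_line by metis
qed

lemma brk_fixes: "c \<notin> {a, b} \<Longrightarrow> \<not> collinear a b c \<Longrightarrow> br a b c = c"
  unfolding brk_def collinear_def by auto

lemma brk_involution:
  assumes "a \<noteq> b"
  shows "br a b (br a b x) = x"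
proof (cases "x \<in> {a, b}")
  case True
  with assms show ?thesis
    by auto
next
  case False
  show ?thesis
  proof (cases "collinear a b x")
    case True
    with False assms have "is_line a b x (br a b x)"
      by (intro is_line_brk) auto
    then show ?thesis
      by (intro brk_is_line) (simp add: is_line_commute)
  next
    case False
    with \<open>x \<notin> {a, b}\<close> show ?thesis
      by (simp add: brk_fixes)
  qed
qed

lemma brk_eq_iff: "a \<noteq> b \<Longrightarrow> br a b u = br a b v \<longleftrightarrow> u = v"
  by (metis brk_involution)

lemma is_line_brk_symdiff:
  assumes line: "is_line a b c d" and w: "w \<notin> {a, b, c, d}" and "collinear a b w"
  shows "is_line c d w (br a b w)"
proof -
  have new_line: "is_line a b w (br a b w)"
    using assms by (intro is_line_brk) (auto simp: is_line_def)
  have "br a b w \<noteq> c"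
  proof
    assume "br a b w = c"
    with new_line have "is_line a b c w"
      by (simp add: is_line_commute)
    with line w show False
      using is_line_unique by blast
  qed
  moreover have "br a b w \<noteq> d"
  proof
    assume "br a b w = d"
    with new_line have "is_line a b d w"
      by (simp add: is_line_commute)
    moreover from line have "is_line a b d c"
      by (simp add: is_line_commute)
    ultimately show False
      using w is_line_unique by blast
  qed
  ultimately show ?thesis
    using is_line_symdiff[OF line new_line] w by auto
qed

lemma collinear_parity:
  assumes "distinct [p, q, r, s]" "{p, q, r, s} \<subseteq> \<Omega>"
  shows "(collinear q r s \<longleftrightarrow> collinear p r s) \<longleftrightarrow> (collinear p q s \<longleftrightarrow> collinear p q r)"
proof -
  define F where "F = {p, q, r, s}"
  define P where "P x \<longleftrightarrow> (\<exists>L \<in># \<B>. F - {x} \<subseteq> L)" for x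
  have F: "finite F" "card F = 4"
    using assms(1) by (auto simp: F_def)
  have "{T \<in> collinear_triples \<Omega> \<B>. T \<subseteq> F} = (\<lambda>x. F - {x}) ` {x \<in> F. P x}"
  proof (intro equalityI subsetI)
    fix T
    assume "T \<in> {T \<in> collinear_triples \<Omega> \<B>. T \<subseteq> F}"
    then have T: "card T = 3" "T \<subseteq> F" "\<exists>L \<in># \<B>. T \<subseteq> L"
      by (auto simp: collinear_triples_def)
    then have "card (F - T) = 1"
      using F by (simp add: card_Diff_subset finite_subset)
    then obtain x where "F - T = {x}"
      by (meson card_1_singletonE)
    with T have "T = F - {x}" "x \<in> F"
      by auto
    with T show "T \<in> (\<lambda>x. F - {x}) ` {x \<in> F. P x}"
      by (auto simp: P_def)
  next
    fix T
    assume "T \<in> (\<lambda>x. F - {x}) ` {x \<in> F. P x}"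
    then obtain x where "x \<in> F" "P x" "T = F - {x}"
      by auto
    with F assms(2) show "T \<in> {T \<in> collinear_triples \<Omega> \<B>. T \<subseteq> F}"
      unfolding collinear_triples_def P_def F_def by auto
  qed
  moreover have "inj_on (\<lambda>x. F - {x}) {x \<in> F. P x}"
    by (auto simp: inj_on_def)
  moreover have "card {T \<in> collinear_triples \<Omega> \<B>. T \<subseteq> F} \<in> {0, 2, 4}"
    using two_graph assms(2) F unfolding regular_two_graph_def F_def by blast
  ultimately have "card {x \<in> F. P x} \<in> {0, 2, 4}"
    by (simp add: card_image)
  then have "(P p \<longleftrightarrow> P q) \<longleftrightarrow> (P r \<longleftrightarrow> P s)"
    using even_count_four_parity[OF assms(1)] unfolding F_def by blast
  moreover have "F - {p} = {q, r, s}" "F - {q} = {p, r, s}" "F - {r} = {p, q, s}" "F - {s} = {p, q, r}"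
    using assms(1) by (auto simp: F_def)
  ultimately show ?thesis
    unfolding P_def collinear_def by (simp only:)
qed

lemma collinear_with_point_of_line:
  assumes line: "is_line a p q r" and b: "b \<notin> {a, p, q, r}" "b \<in> \<Omega>"
  shows "collinear a b p \<or> collinear a b q \<or> collinear a b r"
proof (rule ccontr)
  assume "\<not> ?thesis"
  then have "\<not> collinear a b p" "\<not> collinear a b q" "\<not> collinear a b r"
    by auto
  moreover have "collinear a p q"
    using line by (rule is_line_collinear) auto
  moreover have "(collinear b p q \<longleftrightarrow> collinear a p q) \<longleftrightarrow> (collinear a b q \<longleftrightarrow> collinear a b p)"
    using collinear_parity[of a b p q] line b is_line_subset[OF line] by (auto simp: is_line_def)
  ultimately have "collinear p q b"
    by (simp add: collinear_commute)
  moreover have "is_line p q a r"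
    using line by (simp add: is_line_commute)
  ultimately have "is_line a r b (br p q b)"
    using b is_line_brk_symdiff by blast
  then have "collinear a b r"
    by (rule is_line_collinear) auto
  with \<open>\<not> collinear a b r\<close> show False ..
qed

lemma is_line_replace_collinear:
  assumes line: "is_line a p q r" and b: "b \<notin> {a, p, q, r}" and "collinear a b p"
  shows "is_line b (br a b p) q r"
proof -
  have "is_line a b p (br a b p)"
    using assms by (intro is_line_brk) (auto simp: is_line_def)
  then have fourth_point: "br a p b = br a b p"
    by (intro brk_is_line) (simp add: is_line_commute)
  have "is_line q r b (br a p b)"
    using assms by (intro is_line_brk_symdiff) (auto simp: collinear_commute)
  with fourth_point show ?thesis
    by (simp add: is_line_commute)
qed

lemma collinear_third_of_line:
  assumes line: "is_line a p q r" and b: "b \<notin> {a, p, q, r}" "b \<in> \<Omega>"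
    and "collinear a b p" "collinear a b q"
  shows "collinear a b r"
proof -
  have "is_line b (br a b q) p r"
    using is_line_replace_collinear[of a q p r b] assms by (simp add: is_line_commute insert_commute)
  then have "collinear b p r"
    by (rule is_line_collinear) auto
  moreover have "collinear a p r"
    using line by (rule is_line_collinear) auto
  moreover have "(collinear b p r \<longleftrightarrow> collinear a p r) \<longleftrightarrow> (collinear a b r \<longleftrightarrow> collinear a b p)"
    using collinear_parity[of a b p r] line b is_line_subset[OF line] by (auto simp: is_line_def)
  ultimately show ?thesis
    using assms(4) by simp
qed

lemma is_line_brk_image_collinear:
  assumes line: "is_line a p q r" and b: "b \<notin> {a, p, q, r}" "b \<in> \<Omega>"
    and p: "collinear a b p"
  shows "is_line b (br a b p) (br a b q) (br a b r)"
proof (cases "collinear a b q")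
  case True
  have ab: "a \<noteq> b"
    using b by auto
  have off_ab: "br a b x \<notin> {a, b}" if "x \<notin> {a, b}" for x
    using that brk_eq_iff[OF ab, of x a] brk_eq_iff[OF ab, of x b] by auto
  have pq: "p \<notin> {a, b}" "q \<notin> {a, b}"
    using line b by (auto simp: is_line_def)
  have r: "collinear a b r"
    using collinear_third_of_line[OF line b p True] .
  txt \<open>Exchange \<open>p\<close> on the line through \<open>a\<close>, then \<open>q\<close> on the resulting line through \<open>b\<close>,
    then \<open>r\<close>.\<close>
  have "is_line b q (br a b p) r"
    using is_line_replace_collinear[OF line b(1) p] by (simp add: is_line_commute)
  then have "is_line a (br a b q) (br a b p) r"
    using is_line_replace_collinear[of b q "br a b p" r a] True off_ab[OF pq(1)] line ab
    by (auto simp: is_line_def collinear_commute brk_commute)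
  then have "is_line a r (br a b q) (br a b p)"
    by (simp add: is_line_commute)
  then have "is_line b (br a b r) (br a b q) (br a b p)"
    using is_line_replace_collinear[of a r "br a b q" "br a b p" b] r b off_ab[OF pq(1)] off_ab[OF pq(2)]
    by (auto simp: is_line_def)
  then show ?thesis
    by (simp add: is_line_commute)
next
  case False
  have "is_line a p r q"
    using line by (simp add: is_line_commute)
  then have "\<not> collinear a b r"
    using collinear_third_of_line[of a p r q b] False p b by auto
  with False b line have "br a b q = q" "br a b r = r"
    by (auto intro!: brk_fixes simp: is_line_def)
  with is_line_replace_collinear[OF line b(1) p] show ?thesis
    by simp
qed

lemma is_line_brk_image:
  assumes line: "is_line a p q r" and b: "b \<notin> {a, p, q, r}" "b \<in> \<Omega>"
  shows "is_line b (br a b p) (br a b q) (br a b r)"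
proof -
  consider "collinear a b p" | "collinear a b q" | "collinear a b r"
    using collinear_with_point_of_line[OF line b] by blast
  then show ?thesis
  proof cases
    case 1
    then show ?thesis
      using is_line_brk_image_collinear[OF line b] by blast
  next
    case 2
    have "is_line a q p r"
      using line by (simp add: is_line_commute)
    with 2 b have "is_line b (br a b q) (br a b p) (br a b r)"
      by (intro is_line_brk_image_collinear) auto
    then show ?thesis
      by (simp add: is_line_commute)
  next
    case 3
    have "is_line a r p q"
      using line by (simp add: is_line_commute)
    with 3 b have "is_line b (br a b r) (br a b p) (br a b q)"
      by (intro is_line_brk_image_collinear) auto
    then show ?thesis
      by (simp add: is_line_commute)
  qed
qed

lemma brk_image_line_avoiding:
  assumes ab: "a \<noteq> b" "b \<in> \<Omega>" and line: "is_line u v w t"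
    and off: "a \<notin> {u, v, w, t}" "b \<notin> {u, v, w, t}" and "collinear a u v"
  shows "br a b ` {u, v, w, t} \<in># \<B>"
proof -
  define c where "c = br a u v"
  have auv: "is_line a u v c"
    unfolding c_def using assms by (intro is_line_brk) (auto simp: is_line_def)
  have "is_line w t a (br u v a)"
    using line off assms by (intro is_line_brk_symdiff) (auto simp: collinear_commute)
  moreover have "br u v a = c"
    using auv by (intro brk_is_line) (simp add: is_line_commute)
  ultimately have acw: "is_line a c w t"
    by (simp add: is_line_commute)
  show ?thesis
  proof (cases "c = b")
    case True
    with auv acw have "is_line a b u v" "is_line a b w t"
      by (simp_all add: is_line_commute)
    then have "br a b u = v" "br a b v = u" "br a b w = t" "br a b t = w"
      by (auto intro!: brk_is_line simp: is_line_commute)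
    with line show ?thesis
      by (simp add: is_line_def insert_commute)
  next
    case False
    have "is_line b (br a b u) (br a b v) (br a b c)"
      using auv off False ab by (intro is_line_brk_image) auto
    then have "is_line b (br a b c) (br a b u) (br a b v)"
      by (simp add: is_line_commute)
    moreover have "is_line b (br a b c) (br a b w) (br a b t)"
      using acw off False ab by (intro is_line_brk_image) auto
    moreover have "br a b u \<notin> {br a b w, br a b t}" "br a b v \<notin> {br a b w, br a b t}"
      using line brk_eq_iff[OF ab(1)] by (auto simp: is_line_def)
    ultimately have "is_line (br a b u) (br a b v) (br a b w) (br a b t)"
      by (rule is_line_symdiff)
    then show ?thesis
      by (simp add: is_line_def)
  qed
qed

lemma brk_image_block:
  assumes ab: "a \<noteq> b" "a \<in> \<Omega>" "b \<in> \<Omega>" and L: "L \<in># \<B>"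
  shows "br a b ` L \<in># \<B>"
proof (cases "a \<in> L"; cases "b \<in> L")
  assume "a \<in> L" "b \<in> L"
  then obtain c d where "L = {a, b, c, d}" "is_line a b c d"
    using L ab by (elim block_obtain_line_through) auto
  moreover from this have "br a b c = d" "br a b d = c"
    by (auto intro!: brk_is_line simp: is_line_commute)
  ultimately show ?thesis
    using L by (simp add: insert_commute)
next
  assume "a \<in> L" "b \<notin> L"
  then obtain p q r where "L = {a, p, q, r}" "is_line a p q r"
    using L by (elim block_obtain_line)
  with \<open>b \<notin> L\<close> ab have "is_line b (br a b p) (br a b q) (br a b r)"
    by (intro is_line_brk_image) auto
  with \<open>L = {a, p, q, r}\<close> show ?thesis
    by (simp add: is_line_def)
next
  assume "a \<notin> L" "b \<in> L"
  then obtain p q r where "L = {b, p, q, r}" "is_line b p q r"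
    using L by (elim block_obtain_line)
  with \<open>a \<notin> L\<close> ab have "is_line a (br b a p) (br b a q) (br b a r)"
    by (intro is_line_brk_image) auto
  with \<open>L = {b, p, q, r}\<close> show ?thesis
    by (simp add: is_line_def brk_commute[of b a] insert_commute)
next
  assume off: "a \<notin> L" "b \<notin> L"
  obtain p where "p \<in> L"
    using L block_card by fastforce
  then obtain q r s where Lpqrs: "L = {p, q, r, s}" and line: "is_line p q r s"
    using L by (elim block_obtain_line)
  have "collinear p q r"
    using line by (rule is_line_collinear) auto
  moreover have "(collinear p q r \<longleftrightarrow> collinear a q r) \<longleftrightarrow> (collinear a p r \<longleftrightarrow> collinear a p q)"
    using collinear_parity[of a p q r] line off ab is_line_subset[OF line] Lpqrs
    by (auto simp: is_line_def)
  ultimately consider "collinear a p q" | "collinear a p r" | "collinear a q r"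
    by blast
  then show ?thesis
  proof cases
    case 1
    then show ?thesis
      using brk_image_line_avoiding[OF ab(1,3) line] off Lpqrs by auto
  next
    case 2
    have "is_line p r q s"
      using line by (simp add: is_line_commute)
    from brk_image_line_avoiding[OF ab(1,3) this] 2 off Lpqrs show ?thesis
      by (auto simp: insert_commute)
  next
    case 3
    have "is_line q r p s"
      using line by (simp add: is_line_commute)
    from brk_image_line_avoiding[OF ab(1,3) this] 3 off Lpqrs show ?thesis
      by (auto simp: insert_commute)
  qed
qed

lemma brk_automorphism:
  assumes "a \<noteq> b" "a \<in> \<Omega>" "b \<in> \<Omega>"
  shows "automorphism (br a b)"
  unfolding automorphism_def
proof (intro conjI allI iffI)
  show "bij (br a b)"
    using brk_involution[OF assms(1)] by (rule involuntory_imp_bij)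
next
  fix L
  assume "br a b ` L \<in># \<B>"
  then have "br a b ` br a b ` L \<in># \<B>"
    by (rule brk_image_block[OF assms])
  then show "L \<in># \<B>"
    by (simp add: image_image brk_involution[OF assms(1)])
qed (rule brk_image_block[OF assms])

lemma automorphism_brk:
  assumes g: "automorphism g" and "c \<noteq> d"
  shows "g (br c d v) = br (g c) (g d) (g v)"
proof -
  have "bij g" and blocks: "\<And>L. g ` L \<in># \<B> \<longleftrightarrow> L \<in># \<B>"
    using g by (auto simp: automorphism_def)
  then have inj: "g u = g u' \<longleftrightarrow> u = u'" for u u'
    by (simp add: bij_def inj_eq)
  consider "v \<in> {c, d}" | "v \<notin> {c, d}" "collinear c d v" | "v \<notin> {c, d}" "\<not> collinear c d v"
    by blast
  then show ?thesis
  proof cases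
    case 1
    with \<open>c \<noteq> d\<close> show ?thesis
      by auto
  next
    case 2
    with \<open>c \<noteq> d\<close> have "is_line c d v (br c d v)"
      by (intro is_line_brk) auto
    then have "is_line (g c) (g d) (g v) (g (br c d v))"
      by (auto simp: is_line_def inj blocks[of "{c, d, v, br c d v}", symmetric])
    then show ?thesis
      by (rule brk_is_line[symmetric])
  next
    case 3
    have "\<not> collinear (g c) (g d) (g v)"
    proof
      assume "collinear (g c) (g d) (g v)"
      then obtain K where K: "K \<in># \<B>" "{g c, g d, g v} \<subseteq> K"
        unfolding collinear_def by blast
      have preimage: "u \<in> inv g ` K" if "g u \<in> K" for u
        using that \<open>bij g\<close> by (metis bij_is_inj image_eqI inv_f_f)
      have "inv g ` K \<in># \<B>"
        using K(1) blocks[of "inv g ` K"] \<open>bij g\<close> by (simp add: bij_is_surj image_f_inv_f)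
      moreover have "{c, d, v} \<subseteq> inv g ` K"
        using K(2) preimage by blast
      ultimately have "collinear c d v"
        unfolding collinear_def by blast
      with 3 show False
        by simp
    qed
    with 3 show ?thesis
      by (simp add: brk_fixes inj)
  qed
qed

lemma brk_eq_if_is_line:
  assumes line: "is_line a b c d"
  shows "br a b = br c d"
proof
  fix w
  have agree: "br a' b' w = br c' d' w"
    if "is_line a' b' c' d'" "w \<notin> {a', b', c', d'}" "collinear a' b' w" for a' b' c' d'
    using is_line_brk_symdiff[OF that] by (simp add: brk_is_line)
  have line': "is_line c d a b"
    using line by (simp add: is_line_commute)
  consider "w \<in> {a, b, c, d}" | "w \<notin> {a, b, c, d}" "collinear a b w"
    | "w \<notin> {a, b, c, d}" "collinear c d w" | "w \<notin> {a, b, c, d}" "\<not> collinear a b w" "\<not> collinear c d w"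
    by blast
  then show "br a b w = br c d w"
  proof cases
    case 1
    have "br a b c = d" "br a b d = c" "br c d a = b" "br c d b = a"
      using line line' by (auto intro!: brk_is_line simp: is_line_commute)
    with 1 show ?thesis
      by auto
  next
    case 2
    with agree line show ?thesis
      by blast
  next
    case 3
    with agree[OF line'] show ?thesis
      by (simp add: insert_commute)
  next
    case 4
    then show ?thesis
      by (simp add: brk_fixes)
  qed
qed

end

theorem lemma4p4:
  fixes \<Omega> :: "'a set" and \<B> :: "'a set multiset" and n lam :: nat and x y z :: 'a
  assumes "design_2 \<Omega> \<B> n 4 lam"
    and "supersimple \<B>"
    and "prop_triangle \<B>"
    and "regular_two_graph \<Omega> (collinear_triples \<Omega> \<B>)"
    and "x \<in> \<Omega>" and "y \<in> \<Omega>" and "z \<in> \<Omega>"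
    and "x \<noteq> y" and "y \<noteq> z" and "x \<noteq> z"
  shows "brk \<B> y z \<circ> brk \<B> x y \<circ> brk \<B> y z =
           (if x \<in> line_through \<B> y z then brk \<B> x y else brk \<B> x z)"
proof -
  interpret supersimple_triangle_design \<Omega> \<B>
    using assms(1-4) unfolding supersimple_triangle_design_def design_2_def by blast
  have conjugate: "br y z \<circ> br x y \<circ> br y z = br (br y z x) z"
  proof
    fix w
    have "br y z (br x y (br y z w)) = br (br y z x) (br y z y) (br y z (br y z w))"
      using assms by (intro automorphism_brk brk_automorphism) auto
    then show "(br y z \<circ> br x y \<circ> br y z) w = br (br y z x) z w"
      using assms(9) by (simp add: brk_involution)
  qed
  show ?thesis
  proof (cases "collinear y z x")
    case True
    with assms have "is_line y z x (br y z x)"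
      by (intro is_line_brk) auto
    then have "br x y = br (br y z x) z"
      by (intro brk_eq_if_is_line) (simp add: is_line_commute)
    with True conjugate show ?thesis
      by (simp add: line_through_def collinear_def)
  next
    case False
    with assms have "br y z x = x"
      by (intro brk_fixes) auto
    with False conjugate show ?thesis
      by (auto simp: line_through_def collinear_def)
  qed
qed

end
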